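(* Let $(E_{-1},E_0,\partial,\rho,S,\circ,\Omega)$ be an $\mathrm{LWX}$ $2$-algebroid over $M$, with $[\![\cdot,\cdot]\!]$, $J$ as below. For all $e^1\in\Gamma(E_{-1})$ and $e^0_1,e^0_2,e^0_3,e^0_4\in\Gamma(E_0)$: $$\Omega([\![e^0_1,e^0_2]\!],e^0_3,e^0_4)-\Omega([\![e^0_1,e^0_3]\!],e^0_2,e^0_4)+\Omega([\![e^0_1,e^0_4]\!],e^0_2,e^0_3)+\Omega([\![e^0_2,e^0_3]\!],e^0_1,e^0_4)-\Omega([\![e^0_2,e^0_4]\!],e^0_1,e^0_3)+\Omega([\![e^0_3,e^0_4]\!],e^0_1,e^0_2)$$ $$-[\![\Omega(e^0_1,e^0_2,e^0_3),e^0_4]\!]-[\![\Omega(e^0_1,e^0_3,e^0_4),e^0_2]\!]+[\![\Omega(e^0_1,e^0_2,e^0_4),e^0_3]\!]+[\![\Omega(e^0_2,e^0_3,e^0_4),e^0_1]\!]+\mathcal D S(\Omega(e^0_1,e^0_2,e^0_3),e^0_4)=0,$$ and $2\mathbf J+\mathbf K=-S(\Omega(\partial e^1,e^0_2,e^0_3),e^0_4)$, where $$\mathbf J=S(J(e^1,e^0_2,e^0_3),e^0_4)-S(J(e^1,e^0_2,e^0_4),e^0_3)+S(J(e^1,e^0_3,e^0_4),e^0_2)+3S(\Omega(\partial e^1,e^0_2,e^0_3),e^0_4),$$ $$\mathbf K=S([\![e^1,e^0_2]\!],[\![e^0_3,e^0_4]\!])-S([\![e^1,e^0_3]\!],[\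![e^0_2,e^0_4]\!])+S([\![e^1,e^0_4]\!],[\![e^0_2,e^0_3]\!]).$$
   Context: A Leibniz $2$-algebra $(V_{-1},V_0,d,l_2,l_3)$ consists of a complex of real vector spaces $d:V_{-1}\to V_0$, bilinear maps $l_2:V_{-i}\times V_{-j}\to V_{-i-j}$ for $0\le i+j\le 1$, and a trilinear map $l_3:V_0\times V_0\times V_0\to V_{-1}$ such that for all $w,x,y,z\in V_0$, $m,n\in V_{-1}$: (a) $d\,l_2(x,m)=l_2(x,dm)$; (b) $d\,l_2(m,x)=l_2(dm,x)$; (c) $l_2(dm,n)=l_2(m,dn)$; (d) $d\,l_3(x,y,z)=l_2(x,l_2(y,z))-l_2(l_2(x,y),z)-l_2(y,l_2(x,z))$; (e1) $l_3(x,y,dm)=l_2(x,l_2(y,m))-l_2(l_2(x,y),m)-l_2(y,l_2(x,m))$; (e2) $l_3(x,dm,y)=l_2(x,l_2(m,y))-l_2(l_2(x,m),y)-l_2(m,l_2(x,y))$; (e3) $l_3(dm,x,y)=l_2(m,l_2(x,y))-l_2(l_2(m,x),y)-l_2(x,l_2(m,y))$; (f) $l_2(w,l_3(x,y,z))-l_2(x,l_3(w,y,z))+l_2(y,l_3(w,x,z))+l_2(l_3(w,x,y),z)-l_3(l_2(w,x),y,z)-l_3(x,l_2(w,y),z)-l_3(x,y,l_2(w,z))+l_3(w,l_2(x,y),z)+l_3(w,y,l_2(x,z))-l_3(w,x,l_2(y,z))=0$. An $\mathrm{LWX}$ $2$-algebroid $(E_{-1},E_0,\partial,\rho,S,\circ,\Omega)$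 over a manifold $M$ consists of vector bundles $E_{-1},E_0$ over $M$ with $\mathcal E=E_{-1}\oplus E_0$; a nondegenerate symmetric bilinear form $S$ on $\mathcal E$ for which $E_0$ and $E_{-1}$ are both isotropic; an $\mathbb R$-bilinear operation $\circ$ on $\Gamma(\mathcal E)$ mapping $\Gamma(E_{-i})\times\Gamma(E_{-j})\to\Gamma(E_{-(i+j)})$ for $0\le i+j\le 1$ (and zero on $\Gamma(E_{-1})\times\Gamma(E_{-1})$), skew-symmetric on $\Gamma(E_0)\times\Gamma(E_0)$; an $E_{-1}$-valued $3$-form $\Omega$ on $E_0$; bundle maps $\partial:E_{-1}\to E_0$ and $\rho:E_0\to TM$ ($\rho$ is extended by zero to $E_{-1}$); such that: (i) $(\Gamma(E_{-1}),\Gamma(E_0),\partial,\circ,\Omega)$ is a Leibniz $2$-algebra (with $d=\partial$, $l_2=\circ$, $l_3=\Omega$); (ii) $e\circ e=\frac12\mathcal D S(e,e)$ for all $e\in\Gamma(\mathcal E)$, where $\mathcal D:C^\infty(M)\to\Gamma(E_{-1})$ is defined by $S(\mathcal D f,e^0)=\rho(e^0)(f)$ for all $e^0\in\Gamma(E_0)$; (iii) $S(\partial e^1_1,e^1_2)=S(e^1_1,\partial e^1_2)$ for $e^1_1,e^1_2\in\Gamma(E_{-1})$; (iv) $\rho(e_1)S(e_2,e_3)=S(e_1\circ e_2,e_3)+S(e_2,e_1\circ e_3)$ for all $e_1,e_2,e_3\in\Gamma(\mathcal E)$; (v) $S(\Omega(e^0_1,e^0_2,e^0_3),e^0_4)=-S(e^0_3,\Omega(e^0_1,e^0_2,e^0_4))$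 for all $e^0_i\in\Gamma(E_0)$. Notation: $[\![e_1,e_2]\!]=\frac12(e_1\circ e_2-e_2\circ e_1)$ for $e_1,e_2\in\Gamma(\mathcal E)$, and $J(e_1,e_2,e_3)=[\![[\![e_1,e_2]\!],e_3]\!]+[\![[\![e_2,e_3]\!],e_1]\!]+[\![[\![e_3,e_1]\!],e_2]\!]$. *)

theory Defs
  imports "HOL-Analysis.Product_Vector"
begin

definition bilin :: "('a::real_vector \<Rightarrow> 'b::real_vector \<Rightarrow> 'c::real_vector) \<Rightarrow> bool" where
  "bilin f \<longleftrightarrow> (\<forall>x. linear (f x)) \<and> (\<forall>y. linear (\<lambda>x. f x y))"

definition trilin ::
  "('a::real_vector \<Rightarrow> 'b::real_vector \<Rightarrow> 'c::real_vector \<Rightarrow> 'd::real_vector) \<Rightarrow> bool" where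
  "trilin f \<longleftrightarrow> (\<forall>x y. linear (f x y)) \<and> (\<forall>x z. linear (\<lambda>y. f x y z))
                  \<and> (\<forall>y z. linear (\<lambda>x. f x y z))"

text \<open>The bilinear map l_2 is
  given by its three nonzero components:
  l00 : V_0 \<times> V_0 \<rightarrow> V_0,  lxm x m = l_2(x,m) : V_0 \<times> V_{-1} \<rightarrow> V_{-1},
  lmx m x = l_2(m,x) : V_{-1} \<times> V_0 \<rightarrow> V_{-1};  l3 : V_0^3 \<rightarrow> V_{-1}.\<close>

definition leibniz2 ::
  "('a::real_vector \<Rightarrow> 'b::real_vector) \<Rightarrow> ('b \<Rightarrow> 'b \<Rightarrow> 'b) \<Rightarrow> ('b \<Rightarrow> 'a \<Rightarrow> 'a)
   \<Rightarrow> ('a \<Rightarrow> 'b \<Rightarrow> 'a) \<Rightarrow> ('b \<Rightarrow> 'b \<Rightarrow> 'b \<Rightarrow> 'a) \<Rightarrow> bool" where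
  "leibniz2 d l00 lxm lmx l3 \<longleftrightarrow>
     linear d \<and> bilin l00 \<and> bilin lxm \<and> bilin lmx \<and> trilin l3 \<and>
     (\<forall>x m. d (lxm x m) = l00 x (d m)) \<and>
     (\<forall>m x. d (lmx m x) = l00 (d m) x) \<and>
     (\<forall>m n. lxm (d m) n = lmx m (d n)) \<and>
     (\<forall>x y z. d (l3 x y z) = l00 x (l00 y z) - l00 (l00 x y) z - l00 y (l00 x z)) \<and>
     (\<forall>x y m. l3 x y (d m) = lxm x (lxm y m) - lxm (l00 x y) m - lxm y (lxm x m)) \<and>
     (\<forall>x y m. l3 x (d m) y = lxm x (lmx m y) - lmx (lxm x m) y - lmx m (l00 x y)) \<and>
     (\<forall>x y m. l3 (d m) x y = lmx m (l00 x y) - lmx (lmx m x) y - lxm x (lmx m y)) \<and>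
     (\<forall>w x y z.
        lxm w (l3 x y z) - lxm x (l3 w y z) + lxm y (l3 w x z) + lmx (l3 w x y) z
        - l3 (l00 w x) y z - l3 x (l00 w y) z - l3 x y (l00 w z)
        + l3 w (l00 x y) z + l3 w y (l00 x z) - l3 w x (l00 y z) = 0)"

text \<open>Sections of \<E> = E_{-1} \<oplus> E_0 are pairs (m, x).\<close>

definition inj1 :: "'a \<Rightarrow> 'a \<times> 'b::zero" where "inj1 m = (m, 0)"
definition inj0 :: "'b \<Rightarrow> 'a::zero \<times> 'b" where "inj0 x = (0, x)"

text \<open>The full operation \<circ> on \<Gamma>(\<E>), determined by bilinearity from its components
  (zero on \<Gamma>(E_{-1}) \<times> \<Gamma>(E_{-1})).\<close>
definition circE ::
  "('b \<Rightarrow> 'b \<Rightarrow> 'b) \<Rightarrow> ('b \<Rightarrow> 'a \<Rightarrow> 'a) \<Rightarrow> ('a \<Rightarrow> 'b \<Rightarrow> 'a)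
   \<Rightarrow> 'a::ab_group_add \<times> 'b \<Rightarrow> 'a \<times> 'b \<Rightarrow> 'a \<times> 'b" where
  "circE l00 lxm lmx e1 e2 =
     (lxm (snd e1) (fst e2) + lmx (fst e1) (snd e2), l00 (snd e1) (snd e2))"

definition brE ::
  "('b \<Rightarrow> 'b \<Rightarrow> 'b) \<Rightarrow> ('b \<Rightarrow> 'a \<Rightarrow> 'a) \<Rightarrow> ('a \<Rightarrow> 'b \<Rightarrow> 'a)
   \<Rightarrow> 'a::real_vector \<times> 'b::real_vector \<Rightarrow> 'a \<times> 'b \<Rightarrow> 'a \<times> 'b" where
  "brE l00 lxm lmx e1 e2 =
     scaleR (1/2) (circE l00 lxm lmx e1 e2 - circE l00 lxm lmx e2 e1)"

definition JacE ::
  "('b \<Rightarrow> 'b \<Rightarrow> 'b) \<Rightarrow> ('b \<Rightarrow> 'a \<Rightarrow> 'a) \<Rightarrow> ('a \<Rightarrow> 'b \<Rightarrow> 'a)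
   \<Rightarrow> 'a::real_vector \<times> 'b::real_vector \<Rightarrow> 'a \<times> 'b \<Rightarrow> 'a \<times> 'b \<Rightarrow> 'a \<times> 'b" where
  "JacE l00 lxm lmx e1 e2 e3 =
     brE l00 lxm lmx (brE l00 lxm lmx e1 e2) e3
   + brE l00 lxm lmx (brE l00 lxm lmx e2 e3) e1
   + brE l00 lxm lmx (brE l00 lxm lmx e3 e1) e2"

definition fmE :: "('f \<Rightarrow> 'a \<Rightarrow> 'a) \<Rightarrow> ('f \<Rightarrow> 'b \<Rightarrow> 'b) \<Rightarrow> 'f \<Rightarrow> 'a \<times> 'b \<Rightarrow> 'a \<times> 'b" where
  "fmE fm1 fm0 g e = (fm1 g (fst e), fm0 g (snd e))"

text \<open>LWX 2-algebroid, rendered algebraically: 'f plays the role of C^\<infinity>(M),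
  'a of \<Gamma>(E_{-1}) and 'b of \<Gamma>(E_0) (both C^\<infinity>(M)-modules, via fm1, fm0, whose
  restriction to constants is the real vector space structure).
  Parameters: d = \<partial>, rho = \<rho> (each \<rho>(x) a vector field, i.e. a derivation of 'f),
  S the bilinear form on \<Gamma>(\<E>), l00/lxm/lmx the components of \<circ>, Om = \<Omega>,
  DD = \<D>.\<close>

definition LWX2 ::
  "('f::{comm_ring_1,real_algebra_1} \<Rightarrow> 'a::real_vector \<Rightarrow> 'a) \<Rightarrow> ('f \<Rightarrow> 'b::real_vector \<Rightarrow> 'b)
   \<Rightarrow> ('a \<Rightarrow> 'b) \<Rightarrow> ('b \<Rightarrow> 'f \<Rightarrow> 'f) \<Rightarrow> ('a \<times> 'b \<Rightarrow> 'a \<times> 'b \<Rightarrow> 'f)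
   \<Rightarrow> ('b \<Rightarrow> 'b \<Rightarrow> 'b) \<Rightarrow> ('b \<Rightarrow> 'a \<Rightarrow> 'a) \<Rightarrow> ('a \<Rightarrow> 'b \<Rightarrow> 'a)
   \<Rightarrow> ('b \<Rightarrow> 'b \<Rightarrow> 'b \<Rightarrow> 'a) \<Rightarrow> ('f \<Rightarrow> 'a) \<Rightarrow> bool" where
  "LWX2 fm1 fm0 d rho S l00 lxm lmx Om DD \<longleftrightarrow>
     \<comment> \<open>sections form C^\<infinity>(M)-modules compatible with the real structure\<close>
     module fm1 \<and> module fm0 \<and>
     (\<forall>r m. fm1 (of_real r) m = scaleR r m) \<and> (\<forall>r x. fm0 (of_real r) x = scaleR r x) \<and>
     \<comment> \<open>\<partial> is a bundle map\<close>
     (\<forall>m n. d (m + n) = d m + d n) \<and> (\<forall>g m. d (fm1 g m) = fm0 g (d m)) \<and>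
     \<comment> \<open>\<rho> is a bundle map E_0 \<rightarrow> TM: C^\<infinity>-linear with values in derivations\<close>
     (\<forall>x y h. rho (x + y) h = rho x h + rho y h) \<and>
     (\<forall>g x h. rho (fm0 g x) h = g * rho x h) \<and>
     (\<forall>x. linear (rho x)) \<and>
     (\<forall>x g h. rho x (g * h) = g * rho x h + rho x g * h) \<and>
     \<comment> \<open>S: symmetric, C^\<infinity>-bilinear, nondegenerate, E_0 and E_{-1} isotropic\<close>
     (\<forall>e1 e2. S e1 e2 = S e2 e1) \<and>
     (\<forall>e1 e2 e3. S (e1 + e2) e3 = S e1 e3 + S e2 e3) \<and>
     (\<forall>g e1 e2. S (fmE fm1 fm0 g e1) e2 = g * S e1 e2) \<and>
     (\<forall>e. (\<forall>e'. S e e' = 0) \<longrightarrow> e = 0) \<and>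
     (\<forall>m n. S (inj1 m) (inj1 n) = 0) \<and> (\<forall>x y. S (inj0 x) (inj0 y) = 0) \<and>
     \<comment> \<open>\<circ> is skew-symmetric on \<Gamma>(E_0)\<close>
     (\<forall>x y. l00 x y = - l00 y x) \<and>
     \<comment> \<open>\<Omega> is an E_{-1}-valued 3-form on E_0: C^\<infinity>-trilinear and alternating\<close>
     (\<forall>x1 x2 x3 y. Om (x1 + y) x2 x3 = Om x1 x2 x3 + Om y x2 x3) \<and>
     (\<forall>g x1 x2 x3. Om (fm0 g x1) x2 x3 = fm1 g (Om x1 x2 x3)) \<and>
     (\<forall>x1 x2 x3. Om x1 x2 x3 = - Om x2 x1 x3) \<and>
     (\<forall>x1 x2 x3. Om x1 x2 x3 = - Om x1 x3 x2) \<and>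
     \<comment> \<open>definition of \<D>\<close>
     (\<forall>f x. S (inj1 (DD f)) (inj0 x) = rho x f) \<and>
     \<comment> \<open>(i)\<close>
     leibniz2 d l00 lxm lmx Om \<and>
     \<comment> \<open>(ii)\<close>
     (\<forall>e. circE l00 lxm lmx e e = scaleR (1/2) (inj1 (DD (S e e)))) \<and>
     \<comment> \<open>(iii)\<close>
     (\<forall>m1 m2. S (inj0 (d m1)) (inj1 m2) = S (inj1 m1) (inj0 (d m2))) \<and>
     \<comment> \<open>(iv), with \<rho> extended by zero to E_{-1}\<close>
     (\<forall>e1 e2 e3. rho (snd e1) (S e2 e3)
        = S (circE l00 lxm lmx e1 e2) e3 + S e2 (circE l00 lxm lmx e1 e3)) \<and>
     \<comment> \<open>(v)\<close>
     (\<forall>x1 x2 x3 x4. S (inj1 (Om x1 x2 x3)) (inj0 x4) = - S (inj0 x3) (inj1 (Om x1 x2 x4)))"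

end

theory Submission
  imports Defs
begin

text \<open>Everything is read through the pairing \<open>\<langle>m, x\<rangle> = S(m, x)\<close> of \<open>E_{-1}\<close> with \<open>E_0\<close>,
  which is nondegenerate. Axiom (ii) on \<open>m + x\<close> gives \<open>x \<circ> m + m \<circ> x = \<D>\<langle>m, x\<rangle>\<close>, so the bracket
  \<open>[[m, x]]\<close> equals \<open>\<D>\<langle>m, x\<rangle>/2 - x \<circ> m\<close>. With this, the first identity is the coherence
  axiom (f) of the Leibniz 2-algebra, the four terms \<open>\<langle>\<Omega>(\<dots>), \<dots>\<rangle>\<close> being equal up to sign by (v).
  For the second, axiom (iv) turns \<open>\<langle>x \<circ> m, z\<rangle>\<close> into \<open>\<rho>(x)\<langle>m, z\<rangle> - \<langle>m, x \<circ> z\<rangle>\<close>; by (d), (e1),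
  (iii) and (v) the operators \<open>\<rho>(x)\<close> satisfy \<open>[\<rho>(x), \<rho>(y)] = \<rho>(x \<circ> y)\<close> on the functions
  \<open>\<langle>m, z\<rangle>\<close>, and what remains is the Jacobiator of \<open>\<circ>\<close> on \<open>E_0\<close>, which (d) identifies
  with \<open>\<partial>\<Omega>\<close>.\<close>

locale LWX2_algebroid =
  fixes fm1 :: "'f::{comm_ring_1,real_algebra_1} \<Rightarrow> 'a::real_vector \<Rightarrow> 'a"
    and fm0 :: "'f \<Rightarrow> 'b::real_vector \<Rightarrow> 'b"
    and d :: "'a \<Rightarrow> 'b" and rho :: "'b \<Rightarrow> 'f \<Rightarrow> 'f"
    and S :: "'a \<times> 'b \<Rightarrow> 'a \<times> 'b \<Rightarrow> 'f"
    and l00 :: "'b \<Rightarrow> 'b \<Rightarrow> 'b" and lxm :: "'b \<Rightarrow> 'a \<Rightarrow> 'a" and lmx :: "'a \<Rightarrow> 'b \<Rightarrow> 'a"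
    and Om :: "'b \<Rightarrow> 'b \<Rightarrow> 'b \<Rightarrow> 'a" and DD :: "'f \<Rightarrow> 'a"
  assumes LWX2: "LWX2 fm1 fm0 d rho S l00 lxm lmx Om DD"
begin

lemma
  shows fm1_of_real: "fm1 (of_real r) m = r *\<^sub>R m"
    and fm0_of_real: "fm0 (of_real r) x = r *\<^sub>R x"
    and rho_add: "rho (x + y) h = rho x h + rho y h"
    and rho_fm0: "rho (fm0 g x) h = g * rho x h"
    and rho_linear: "linear (rho x)"
    and S_commute: "S e1 e2 = S e2 e1"
    and S_add_left: "S (e1 + e2) e3 = S e1 e3 + S e2 e3"
    and S_fmE: "S (fmE fm1 fm0 g e1) e2 = g * S e1 e2"
    and S_nondegenerate: "(\<And>e'. S e e' = 0) \<Longrightarrow> e = 0"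
    and S_inj1_inj1: "S (inj1 m) (inj1 n) = 0"
    and S_inj0_inj0: "S (inj0 x) (inj0 y) = 0"
    and l00_skew: "l00 x y = - l00 y x"
    and Om_swap12: "Om x1 x2 x3 = - Om x2 x1 x3"
    and Om_swap23: "Om x1 x2 x3 = - Om x1 x3 x2"
    and S_DD: "S (inj1 (DD f)) (inj0 x) = rho x f"
    and leibniz2: "leibniz2 d l00 lxm lmx Om"
    and circE_diag: "circE l00 lxm lmx e e = (1/2) *\<^sub>R inj1 (DD (S e e))"
    and S_d_sym: "S (inj0 (d m1)) (inj1 m2) = S (inj1 m1) (inj0 (d m2))"
    and S_invariant: "rho (snd e1) (S e2 e3) = S (circE l00 lxm lmx e1 e2) e3 + S e2 (circE l00 lxm lmx e1 e3)"
    and S_Om_skew: "S (inj1 (Om x1 x2 x3)) (inj0 x4) = - S (inj0 x3) (inj1 (Om x1 x2 x4))"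
  using LWX2 unfolding LWX2_def by meson+

lemma
  shows l00_linear_right: "linear (l00 x)"
    and l00_linear_left: "linear (\<lambda>x. l00 x y)"
    and lxm_linear_right: "linear (lxm x)"
    and lxm_linear_left: "linear (\<lambda>x. lxm x m)"
    and lmx_linear_right: "linear (lmx m)"
    and lmx_linear_left: "linear (\<lambda>m. lmx m x)"
    and d_Om: "d (Om x y z) = l00 x (l00 y z) - l00 (l00 x y) z - l00 y (l00 x z)"
    and Om_d_right: "Om x y (d m) = lxm x (lxm y m) - lxm (l00 x y) m - lxm y (lxm x m)"
    and Om_coherence: "lxm w (Om x y z) - lxm x (Om w y z) + lxm y (Om w x z) + lmx (Om w x y) z
        - Om (l00 w x) y z - Om x (l00 w y) z - Om x y (l00 w z)
        + Om w (l00 x y) z + Om w y (l00 x z) - Om w x (l00 y z) = 0"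
  using leibniz2 unfolding leibniz2_def bilin_def by meson+

lemma l2_components_zero:
  "l00 0 x = 0" "l00 x 0 = 0" "lxm 0 m = 0" "lxm x 0 = 0" "lmx 0 x = 0" "lmx m 0 = 0"
  using linear_0 l00_linear_right l00_linear_left lxm_linear_right lxm_linear_left
    lmx_linear_right lmx_linear_left by blast+

lemma S_scaleR_left: "S (r *\<^sub>R e1) e2 = r *\<^sub>R S e1 e2"
proof -
  have "fmE fm1 fm0 (of_real r) e1 = r *\<^sub>R e1"
    by (cases e1) (simp add: fmE_def fm1_of_real fm0_of_real)
  then show ?thesis
    using S_fmE[of "of_real r" e1 e2] by (simp add: scaleR_conv_of_real)
qed

lemma S_linear_left: "linear (\<lambda>e. S e e2)"
  by (rule linearI) (simp_all add: S_add_left S_scaleR_left)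

lemma S_linear_right: "linear (S e1)"
  by (rule linearI) (simp_all add: S_commute[of e1] S_add_left S_scaleR_left)

lemma rho_linear_left: "linear (\<lambda>x. rho x h)"
proof -
  have "rho (r *\<^sub>R x) h = r *\<^sub>R rho x h" for r x
    using rho_fm0[of "of_real r" x h] by (simp add: fm0_of_real scaleR_conv_of_real)
  then show ?thesis by (intro linearI) (simp_all add: rho_add)
qed

definition pairing :: "'a \<Rightarrow> 'b \<Rightarrow> 'f" where
  "pairing m x = S (inj1 m) (inj0 x)"

lemma pairing_linear_left: "linear (\<lambda>m. pairing m x)"
proof -
  have "linear (inj1 :: 'a \<Rightarrow> 'a \<times> 'b)" by (rule linearI) (simp_all add: inj1_def)
  then show ?thesis
    unfolding pairing_def using linear_compose[OF _ S_linear_left] by (simp add: o_def)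
qed

lemma pairing_linear_right: "linear (pairing m)"
proof -
  have "linear (inj0 :: 'b \<Rightarrow> 'a \<times> 'b)" by (rule linearI) (simp_all add: inj0_def)
  then show ?thesis
    unfolding pairing_def using linear_compose[OF _ S_linear_right] by (simp add: o_def)
qed

lemma pair_eq_inj1_plus_inj0: "(m :: 'a, x :: 'b) = inj1 m + inj0 x"
  by (simp add: inj1_def inj0_def)

lemma S_inj1_pair: "S (inj1 k) (m, x) = pairing k x"
proof -
  have "S (inj1 k) (m, x) = S (inj1 m) (inj1 k) + S (inj0 x) (inj1 k)"
    by (subst S_commute) (simp only: pair_eq_inj1_plus_inj0 S_add_left)
  then show ?thesis by (simp add: S_inj1_inj1 S_commute[of "inj0 x" "inj1 k"] pairing_def)
qed

lemma S_pair_pair: "S (m, x) (m, x) = pairing m x + pairing m x"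
proof -
  have "S (m, x) (m, x) = S (inj1 m) (m, x) + S (inj0 x) (m, x)"
    by (simp only: pair_eq_inj1_plus_inj0[of m x] S_add_left)
  also have "S (inj0 x) (m, x) = S (inj1 m) (inj0 x) + S (inj0 x) (inj0 x)"
    by (subst S_commute) (simp only: pair_eq_inj1_plus_inj0 S_add_left)
  finally show ?thesis by (simp add: S_inj1_pair S_inj0_inj0 pairing_def)
qed

lemma pairing_nondegenerate:
  assumes "\<And>x. pairing k x = 0"
  shows "k = 0"
proof -
  have "inj1 k = (0 :: 'a \<times> 'b)"
  proof (rule S_nondegenerate)
    show "S (inj1 k) e' = 0" for e'
      using assms by (cases e') (simp add: S_inj1_pair)
  qed
  then show ?thesis by (simp add: inj1_def zero_prod_def)
qed

lemma pairing_DD: "pairing (DD f) x = rho x f"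
  by (simp add: pairing_def S_DD)

lemma DD_linear: "linear DD"
proof (rule linearI)
  show "DD (f + g) = DD f + DD g" for f g
    using pairing_nondegenerate[of "DD (f + g) - (DD f + DD g)"]
    by (simp add: linear_diff[OF pairing_linear_left] linear_add[OF pairing_linear_left]
        pairing_DD linear_add[OF rho_linear])
  show "DD (r *\<^sub>R f) = r *\<^sub>R DD f" for r f
    using pairing_nondegenerate[of "DD (r *\<^sub>R f) - r *\<^sub>R DD f"]
    by (simp add: linear_diff[OF pairing_linear_left] linear_scale[OF pairing_linear_left]
        pairing_DD linear_scale[OF rho_linear])
qed

lemma lxm_add_lmx: "lxm x m + lmx m x = DD (pairing m x)"
proof -
  have "lxm x m + lmx m x = (1/2) *\<^sub>R DD (pairing m x + pairing m x)"
    using circE_diag[of "(m, x)"] by (simp add: circE_def inj1_def S_pair_pair del: mult_2)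
  then show ?thesis by (simp only: linear_add[OF DD_linear] scaleR_half_double)
qed

lemma rho_pairing: "rho y (pairing m z) = pairing (lxm y m) z + pairing m (l00 y z)"
proof -
  have "circE l00 lxm lmx (inj0 y) (inj1 m) = inj1 (lxm y m)"
    and "circE l00 lxm lmx (inj0 y) (inj0 z) = inj0 (l00 y z)"
    by (simp_all add: circE_def inj0_def inj1_def l2_components_zero)
  then show ?thesis
    using S_invariant[of "inj0 y" "inj1 m" "inj0 z"] by (simp add: pairing_def inj0_def)
qed

lemma pairing_Om_skew: "pairing (Om x1 x2 x3) x4 = - pairing (Om x1 x2 x4) x3"
  using S_Om_skew[of x1 x2 x3 x4] by (simp add: pairing_def S_commute[of "inj0 x3"])

lemma pairing_d_sym: "pairing m (d n) = pairing n (d m)"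
  using S_d_sym[of n m] by (simp add: pairing_def S_commute[of "inj0 (d n)"])

lemma rho_commutator_pairing:
  "rho x (rho y (pairing m z)) - rho y (rho x (pairing m z)) = rho (l00 x y) (pairing m z)"
proof -
  \<comment> \<open>(iii) and (v) make the pairings of (e1) and of (d) cancel\<close>
  have "pairing (Om x y (d m)) z + pairing m (d (Om x y z)) = 0"
    by (simp add: pairing_d_sym[of m] pairing_Om_skew[of x y z])
  then have "pairing (lxm x (lxm y m)) z - pairing (lxm (l00 x y) m) z - pairing (lxm y (lxm x m)) z
      + (pairing m (l00 x (l00 y z)) - pairing m (l00 (l00 x y) z) - pairing m (l00 y (l00 x z))) = 0"
    by (simp add: Om_d_right d_Om linear_diff[OF pairing_linear_left] linear_diff[OF pairing_linear_right])
  then show ?thesis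
    by (simp add: rho_pairing linear_add[OF rho_linear] algebra_simps)
qed

definition bracket10 :: "'a \<Rightarrow> 'b \<Rightarrow> 'a" where
  "bracket10 m x = (1/2) *\<^sub>R (lmx m x - lxm x m)"

lemma bracket10_eq: "bracket10 m x = (1/2) *\<^sub>R DD (pairing m x) - lxm x m"
proof -
  have "bracket10 m x = (1/2) *\<^sub>R DD (pairing m x) - (1/2) *\<^sub>R (lxm x m + lxm x m)"
    by (simp add: bracket10_def lxm_add_lmx[symmetric] algebra_simps)
  then show ?thesis by simp
qed

lemma bracket10_linear_left: "linear (\<lambda>m. bracket10 m x)"
  unfolding bracket10_def
  by (rule linearI) (simp_all add: linear_add[OF lmx_linear_left] linear_add[OF lxm_linear_right]
      linear_scale[OF lmx_linear_left] linear_scale[OF lxm_linear_right] algebra_simps)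

lemma pairing_bracket10:
  "pairing (bracket10 m x) z = (1/2) *\<^sub>R rho z (pairing m x) - rho x (pairing m z) + pairing m (l00 x z)"
  by (simp add: bracket10_eq linear_diff[OF pairing_linear_left] linear_scale[OF pairing_linear_left]
      pairing_DD rho_pairing)

lemma brE_inj1_inj0: "brE l00 lxm lmx (inj1 m) (inj0 x) = inj1 (bracket10 m x)"
  by (simp add: brE_def circE_def inj0_def inj1_def l2_components_zero bracket10_def)

lemma brE_inj0_inj1: "brE l00 lxm lmx (inj0 x) (inj1 m) = inj1 (- bracket10 m x)"
  by (simp add: brE_def circE_def inj0_def inj1_def l2_components_zero bracket10_def algebra_simps)

lemma brE_inj0_inj0: "brE l00 lxm lmx (inj0 x) (inj0 y) = inj0 (l00 x y)"
proof -
  have "brE l00 lxm lmx (inj0 x) (inj0 y) = inj0 ((1/2) *\<^sub>R (l00 x y + l00 x y))"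
    by (simp add: brE_def circE_def inj0_def inj1_def l2_components_zero l00_skew[of y x] del: mult_2)
  then show ?thesis by simp
qed

lemma Om_bracket_identity:
  "Om (l00 x1 x2) x3 x4 - Om (l00 x1 x3) x2 x4 + Om (l00 x1 x4) x2 x3 + Om (l00 x2 x3) x1 x4
   - Om (l00 x2 x4) x1 x3 + Om (l00 x3 x4) x1 x2
   - bracket10 (Om x1 x2 x3) x4 - bracket10 (Om x1 x3 x4) x2
   + bracket10 (Om x1 x2 x4) x3 + bracket10 (Om x2 x3 x4) x1
   + DD (pairing (Om x1 x2 x3) x4) = 0"
proof -
  define \<sigma> where "\<sigma> = pairing (Om x1 x2 x3) x4"
  define H where "H = (1/2) *\<^sub>R DD \<sigma>"
  have DD_\<sigma>: "DD \<sigma> = H + H" "DD (- \<sigma>) = - (H + H)"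
    by (simp_all add: H_def linear_neg[OF DD_linear] flip: scaleR_add_left)
  have "pairing (Om x1 x3 x4) x2 = \<sigma>" "pairing (Om x1 x2 x4) x3 = - \<sigma>"
    "pairing (Om x2 x3 x4) x1 = - \<sigma>"
    unfolding \<sigma>_def pairing_Om_skew[of _ _ x4]
    by (metis Om_swap12 Om_swap23 linear_neg[OF pairing_linear_left] minus_minus)+
  then have brackets:
    "bracket10 (Om x1 x2 x3) x4 = H - lxm x4 (Om x1 x2 x3)"
    "bracket10 (Om x1 x3 x4) x2 = H - lxm x2 (Om x1 x3 x4)"
    "bracket10 (Om x1 x2 x4) x3 = - H - lxm x3 (Om x1 x2 x4)"
    "bracket10 (Om x2 x3 x4) x1 = - H - lxm x1 (Om x2 x3 x4)"
    by (simp_all add: bracket10_eq H_def \<sigma>_def linear_neg[OF DD_linear])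
  have lmx_\<sigma>: "lmx (Om x1 x2 x3) x4 = H + H - lxm x4 (Om x1 x2 x3)"
    using lxm_add_lmx[of x4 "Om x1 x2 x3"] DD_\<sigma> by (simp add: \<sigma>_def algebra_simps)
  have Om_reordered: "Om x2 (l00 x1 x3) x4 = - Om (l00 x1 x3) x2 x4"
    "Om x2 x3 (l00 x1 x4) = Om (l00 x1 x4) x2 x3"
    "Om x1 (l00 x2 x3) x4 = - Om (l00 x2 x3) x1 x4"
    "Om x1 x3 (l00 x2 x4) = Om (l00 x2 x4) x1 x3"
    "Om x1 x2 (l00 x3 x4) = Om (l00 x3 x4) x1 x2"
    by (metis Om_swap12 Om_swap23 minus_minus)+
  show ?thesis
    using Om_coherence[of x1 x2 x3 x4] unfolding lmx_\<sigma> Om_reordered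
    by (simp add: brackets DD_\<sigma>(1)[unfolded \<sigma>_def] algebra_simps)
qed

definition jacobiator10 :: "'a \<Rightarrow> 'b \<Rightarrow> 'b \<Rightarrow> 'a" where
  "jacobiator10 m x y = bracket10 (bracket10 m x) y - bracket10 m (l00 x y) - bracket10 (bracket10 m y) x"

lemma JacE_inj1_inj0_inj0:
  "JacE l00 lxm lmx (inj1 m) (inj0 x) (inj0 y) = inj1 (jacobiator10 m x y)"
  unfolding JacE_def brE_inj1_inj0 brE_inj0_inj1 brE_inj0_inj0 jacobiator10_def
  by (simp add: linear_neg[OF bracket10_linear_left] inj1_def)

lemma pairing_jacobiator10_identity:
  "2 * (pairing (jacobiator10 m a b) c - pairing (jacobiator10 m a c) b
        + pairing (jacobiator10 m b c) a + 3 * pairing (Om (d m) a b) c)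
   + (pairing (bracket10 m a) (l00 b c) - pairing (bracket10 m b) (l00 a c)
        + pairing (bracket10 m c) (l00 a b))
   = - pairing (Om (d m) a b) c"
proof -
  have commute: "rho x (rho y X) = rho y (rho x X) + rho (l00 x y) X" if "X = pairing m z" for x y z X
    using rho_commutator_pairing[of x y m z] that by (simp add: algebra_simps)
  have commute_ba: "rho b (rho a X) = rho a (rho b X) + rho (l00 b a) X"
    and commute_ca: "rho c (rho a X) = rho a (rho c X) + rho (l00 c a) X"
    and commute_cb: "rho c (rho b X) = rho b (rho c X) + rho (l00 c b) X" if "X = pairing m z" for z X
    using commute that by blast+
  have skew: "l00 b a = - l00 a b" "l00 c a = - l00 a c" "l00 c b = - l00 b c"
    "l00 c (l00 a b) = - l00 (l00 a b) c" "l00 (l00 b c) a = - l00 a (l00 b c)"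
    "l00 (l00 a c) b = - l00 b (l00 a c)"
    by (rule l00_skew)+
  have neg: "rho (- u) X = - rho u X" "pairing m (- v) = - pairing m v"
    "l00 (- v) w = - l00 v w" "l00 w (- v) = - l00 w v" for u X v w
    by (simp_all add: linear_neg[OF rho_linear_left] linear_neg[OF pairing_linear_right]
        linear_neg[OF l00_linear_right] linear_neg[OF l00_linear_left])
  have jacobi_defect:
    "pairing m (l00 a (l00 b c)) = pairing m (d (Om a b c)) + pairing m (l00 (l00 a b) c)
       + pairing m (l00 b (l00 a c))"
    by (simp add: d_Om linear_diff[OF pairing_linear_right])
  have pairing_d_Om: "pairing m (d (Om a b c)) = - pairing (Om (d m) a b) c"
    by (simp add: pairing_d_sym[of m] pairing_Om_skew[of a b c] Om_swap12[of a "d m"]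
        Om_swap23[of a b "d m"] Om_swap12[of b "d m"] linear_neg[OF pairing_linear_left])
  define h where "h = (of_real (1/2) :: 'f)"
  have half: "h * (2 * X) = X" for X
  proof -
    have "h + h = 1" unfolding h_def by (simp flip: of_real_add)
    moreover have "h * (2 * X) = (h + h) * X" by (simp add: algebra_simps mult_2)
    ultimately show ?thesis by simp
  qed
  have half4: "h * (4 * X) = 2 * X" for X
    using half[of "2 * X"] by (simp add: mult.assoc[symmetric])
  \<comment> \<open>Expand into second derivatives \<open>\<rho> u (\<rho> v \<langle>m, w\<rangle>)\<close>, put them in a normal order by
    \<open>commute_*\<close>, and trade the Jacobiator for \<open>\<partial>\<Omega>\<close>; what is left is an identity in \<open>h = 1/2\<close>.\<close>
  show ?thesis
    unfolding jacobiator10_def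
    apply (simp add: linear_diff[OF pairing_linear_left] linear_add[OF pairing_linear_left]
        pairing_bracket10 linear_add[OF rho_linear] linear_diff[OF rho_linear] linear_scale[OF rho_linear])
    apply (simp add: commute_ba commute_ca commute_cb linear_add[OF rho_linear] linear_neg[OF rho_linear]
        skew neg jacobi_defect pairing_d_Om)
    apply (simp add: scaleR_conv_of_real h_def[symmetric])
    apply (simp add: algebra_simps half half4)
    done
qed

end

theorem mainTheorem5:
  fixes fm1 :: "'f::{comm_ring_1,real_algebra_1} \<Rightarrow> 'a::real_vector \<Rightarrow> 'a"
    and fm0 :: "'f \<Rightarrow> 'b::real_vector \<Rightarrow> 'b"
    and d :: "'a \<Rightarrow> 'b" and rho :: "'b \<Rightarrow> 'f \<Rightarrow> 'f"
    and S :: "'a \<times> 'b \<Rightarrow> 'a \<times> 'b \<Rightarrow> 'f"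
    and l00 :: "'b \<Rightarrow> 'b \<Rightarrow> 'b" and lxm :: "'b \<Rightarrow> 'a \<Rightarrow> 'a" and lmx :: "'a \<Rightarrow> 'b \<Rightarrow> 'a"
    and Om :: "'b \<Rightarrow> 'b \<Rightarrow> 'b \<Rightarrow> 'a" and DD :: "'f \<Rightarrow> 'a"
    and m :: 'a and x1 x2 x3 x4 :: 'b
  assumes lwx: "LWX2 fm1 fm0 d rho S l00 lxm lmx Om DD"
  defines "br \<equiv> brE l00 lxm lmx" and "J \<equiv> JacE l00 lxm lmx"
  shows
    "inj1 (Om (snd (br (inj0 x1) (inj0 x2))) x3 x4) - inj1 (Om (snd (br (inj0 x1) (inj0 x3))) x2 x4)
     + inj1 (Om (snd (br (inj0 x1) (inj0 x4))) x2 x3) + inj1 (Om (snd (br (inj0 x2) (inj0 x3))) x1 x4)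
     - inj1 (Om (snd (br (inj0 x2) (inj0 x4))) x1 x3) + inj1 (Om (snd (br (inj0 x3) (inj0 x4))) x1 x2)
     - br (inj1 (Om x1 x2 x3)) (inj0 x4) - br (inj1 (Om x1 x3 x4)) (inj0 x2)
     + br (inj1 (Om x1 x2 x4)) (inj0 x3) + br (inj1 (Om x2 x3 x4)) (inj0 x1)
     + inj1 (DD (S (inj1 (Om x1 x2 x3)) (inj0 x4))) = 0
   \<and> 2 * (S (J (inj1 m) (inj0 x2) (inj0 x3)) (inj0 x4) - S (J (inj1 m) (inj0 x2) (inj0 x4)) (inj0 x3)
          + S (J (inj1 m) (inj0 x3) (inj0 x4)) (inj0 x2) + 3 * S (inj1 (Om (d m) x2 x3)) (inj0 x4))
     + (S (br (inj1 m) (inj0 x2)) (br (inj0 x3) (inj0 x4)) - S (br (inj1 m) (inj0 x3)) (br (inj0 x2) (inj0 x4))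
          + S (br (inj1 m) (inj0 x4)) (br (inj0 x2) (inj0 x3)))
     = - S (inj1 (Om (d m) x2 x3)) (inj0 x4)"
proof -
  interpret LWX2_algebroid fm1 fm0 d rho S l00 lxm lmx Om DD
    by (rule LWX2_algebroid.intro) (rule lwx)
  show ?thesis
    using Om_bracket_identity[of x1 x2 x3 x4] pairing_jacobiator10_identity[of m x2 x3 x4]
    unfolding br_def J_def brE_inj0_inj0 brE_inj1_inj0 JacE_inj1_inj0_inj0 pairing_def
    by (simp add: inj1_def inj0_def zero_prod_def)
qed

end
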